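(* If $\phi\in C(\mathbb{Z}_p,\mathbb{C}_p)$ and $y\in\mathbb{Z}_p$, then in $\mathbb{C}_p[[t]]$ $$(1-t)^yA(\phi)=A(S^y(\phi))\quad\text{and}\quad(1-t)^yP(\phi)=P(S^y(\phi)).$$
   Context: Fix a prime $p$. $\mathbb{C}_p$ denotes the completion of an algebraic closure of $\mathbb{Q}_p$, with absolute value $|\cdot|$ normalized by $|p|=1/p$. $C(\mathbb{Z}_p,\mathbb{C}_p)$ is the $\mathbb{C}_p$-Banach space of continuous functions $\mathbb{Z}_p\to\mathbb{C}_p$ with the sup-norm $\|\cdot\|$. For $n\in\mathbb{Z}_{\ge0}$ and $x\in\mathbb{Z}_p$, $\binom{x}{n}=x(x-1)\cdots(x-n+1)/n!$. For $\phi\in C(\mathbb{Z}_p,\mathbb{C}_p)$ let $(\nabla\phi)(x)=\phi(x+1)-\phi(x)$; every such $\phi$ has the Mahler expansion $\phi(x)=\sum_{n\ge0}(\nabla^n\phi)(0)\binom{x}{n}$. Define $P(\phi)=\sum_{n\ge0}(\nabla^n\phi)(0)\,t^n/n!$ and $A(\phi)=\sum_{n\ge0}\phi(n)\,t^n/n!=e^{t}P(\phi)$ in $\mathbb{C}_p[[t]]$. For $y\in\mathbb{Z}_p$ define $S^y(\phi)\in C(\mathbb{Z}_p,\mathbb{C}_p)$ by $S^y(\phi)(x)=\sum_{k\ge0}(-1)^k k!\binom yk\binom xk\phi(x-k)$. For $y\in\mathbb{Z}_p$, $(1-t)^y:=\sum_{k\ge0}(-1)^k\binom yk t^k\in\mathbb{C}_p[[t]]$.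 *)

theory Defs
  imports "HOL-Computational_Algebra.Computational_Algebra"
begin

text \<open>The field C_p is modelled axiomatically: a field K of characteristic 0 together with
an absolute value nabs such that (K, nabs) is a model of C_p, namely the completion of an
algebraic closure of Q with respect to an absolute value extending the p-adic absolute value
of Q (normalised by |p| = 1/p). Any two such models are isometrically isomorphic.\<close>

definition is_abs :: "('a::field \<Rightarrow> real) \<Rightarrow> bool" where
  "is_abs nabs \<longleftrightarrow>
     (\<forall>x. nabs x \<ge> 0) \<and> (\<forall>x. nabs x = 0 \<longleftrightarrow> x = 0) \<and>
     (\<forall>x y. nabs (x * y) = nabs x * nabs y) \<and>
     (\<forall>x y. nabs (x + y) \<le> max (nabs x) (nabs y))"

definition is_complete_abs :: "('a::field \<Rightarrow> real) \<Rightarrow> bool" where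
  "is_complete_abs nabs \<longleftrightarrow>
     (\<forall>X :: nat \<Rightarrow> 'a.
        (\<forall>e>0. \<exists>N. \<forall>m\<ge>N. \<forall>n\<ge>N. nabs (X m - X n) < e) \<longrightarrow>
        (\<exists>L. \<forall>e>0. \<exists>N. \<forall>n\<ge>N. nabs (X n - L) < e))"

definition algebraic_over_rat :: "'a::field_char_0 \<Rightarrow> bool" where
  "algebraic_over_rat a \<longleftrightarrow> (\<exists>q :: rat poly. q \<noteq> 0 \<and> poly (map_poly of_rat q) a = 0)"

definition is_Cp :: "nat \<Rightarrow> ('a::field_char_0 \<Rightarrow> real) \<Rightarrow> bool" where
  "is_Cp p nabs \<longleftrightarrow>
     is_abs nabs \<and> nabs (of_nat p) = 1 / real p \<and> is_complete_abs nabs \<and>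
     (\<forall>x. \<forall>e>0. \<exists>a. algebraic_over_rat a \<and> nabs (x - a) < e)"

definition Zp :: "('a::field_char_0 \<Rightarrow> real) \<Rightarrow> 'a set" where
  "Zp nabs = {x. \<forall>e>0. \<exists>n::int. nabs (x - of_int n) < e}"

definition continuous_on_abs :: "('a::field \<Rightarrow> real) \<Rightarrow> 'a set \<Rightarrow> ('a \<Rightarrow> 'a) \<Rightarrow> bool" where
  "continuous_on_abs nabs S f \<longleftrightarrow>
     (\<forall>x\<in>S. \<forall>e>0. \<exists>d>0. \<forall>x'\<in>S. nabs (x' - x) < d \<longrightarrow> nabs (f x' - f x) < e)"

definition sums_abs :: "('a::field \<Rightarrow> real) \<Rightarrow> (nat \<Rightarrow> 'a) \<Rightarrow> 'a \<Rightarrow> bool" where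
  "sums_abs nabs f s \<longleftrightarrow> (\<forall>e>0. \<exists>N. \<forall>n\<ge>N. nabs ((\<Sum>k<n. f k) - s) < e)"

definition suminf_abs :: "('a::field \<Rightarrow> real) \<Rightarrow> (nat \<Rightarrow> 'a) \<Rightarrow> 'a" where
  "suminf_abs nabs f = (THE s. sums_abs nabs f s)"

definition bin :: "'a::field_char_0 \<Rightarrow> nat \<Rightarrow> 'a" where
  "bin x n = (\<Prod>i<n. x - of_nat i) / fact n"

definition nabla :: "('a::field_char_0 \<Rightarrow> 'a) \<Rightarrow> 'a \<Rightarrow> 'a" where
  "nabla f = (\<lambda>x. f (x + 1) - f x)"

definition Pser :: "('a::field_char_0 \<Rightarrow> 'a) \<Rightarrow> 'a fps" where
  "Pser f = Abs_fps (\<lambda>n. (nabla ^^ n) f 0 / fact n)"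

definition Aser :: "('a::field_char_0 \<Rightarrow> 'a) \<Rightarrow> 'a fps" where
  "Aser f = Abs_fps (\<lambda>n. f (of_nat n) / fact n)"

definition Sy :: "('a::field_char_0 \<Rightarrow> real) \<Rightarrow> 'a \<Rightarrow> ('a \<Rightarrow> 'a) \<Rightarrow> 'a \<Rightarrow> 'a" where
  "Sy nabs y f x =
     suminf_abs nabs (\<lambda>k. (-1) ^ k * fact k * bin y k * bin x k * f (x - of_nat k))"

definition one_minus_t_pow :: "'a::field_char_0 \<Rightarrow> 'a fps" where
  "one_minus_t_pow y = Abs_fps (\<lambda>k. (-1) ^ k * bin y k)"

end

theory Submission
  imports Defs
begin

text \<open>At a natural number n the series defining S^y(phi)(n) is a finite sum, since
binom(n, k) = 0 for k > n; the first identity is then a comparison of coefficients using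
k! binom(n, k) / n! = 1 / (n - k)!. The second follows from the first because
P(phi) = e^{-t} A(phi): shifting a sequence differentiates its exponential generating function,
so A(nabla phi) = (D - 1) A(phi), and e^{-t} (D - 1) = D e^{-t}. Hence (nabla^n phi)(0), the
constant term of e^{-t} A(nabla^n phi), is the constant term of D^n (e^{-t} A(phi)), which is
n! times its n-th coefficient. Only the fact that nabs is an absolute value (so that limits are
unique) is used.\<close>

lemma bin_of_nat: "bin (of_nat n :: 'a::field_char_0) k = of_nat (n choose k)"
  by (simp add: bin_def gbinomial_prod_rev atLeast0LessThan binomial_gbinomial)

lemma is_abs_minus:
  assumes "is_abs nabs"
  shows "nabs (- x) = nabs x"
proof -
  have mult: "\<And>x y. nabs (x * y) = nabs x * nabs y"
    and nonneg: "\<And>x. nabs x \<ge> 0" and zero: "\<And>x. nabs x = 0 \<longleftrightarrow> x = 0"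
    using assms unfolding is_abs_def by auto
  have "nabs 1 = 1"
    using mult[of 1 1] zero[of 1] by (metis mult_cancel_left1 one_neq_zero)
  then have "nabs (-1) * nabs (-1) = 1"
    using mult[of "-1" "-1"] by simp
  then have "nabs (-1) = 1"
    using nonneg[of "-1"] by (metis abs_of_nonneg abs_square_eq_1 power2_eq_square)
  then show ?thesis
    using mult[of "-1" x] by simp
qed

lemma sums_abs_unique:
  assumes "is_abs nabs" "sums_abs nabs f s" "sums_abs nabs f s'"
  shows "s = s'"
proof -
  have ultra: "\<And>x y. nabs (x + y) \<le> max (nabs x) (nabs y)"
    and nonneg: "\<And>x. nabs x \<ge> 0" and zero: "\<And>x. nabs x = 0 \<longleftrightarrow> x = 0"
    using assms(1) unfolding is_abs_def by auto
  have "nabs (s - s') < e" if "e > 0" for e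
  proof -
    obtain N where N: "\<forall>n\<ge>N. nabs ((\<Sum>k<n. f k) - s) < e"
      using assms(2) \<open>e > 0\<close> unfolding sums_abs_def by blast
    obtain N' where N': "\<forall>n\<ge>N'. nabs ((\<Sum>k<n. f k) - s') < e"
      using assms(3) \<open>e > 0\<close> unfolding sums_abs_def by blast
    define S where "S = (\<Sum>k<max N N'. f k)"
    have "nabs (S - s) < e" "nabs (S - s') < e"
      using N N' by (simp_all add: S_def)
    moreover have "nabs (s - s') \<le> max (nabs (S - s')) (nabs (- (S - s)))"
      using ultra[of "S - s'" "- (S - s)"] by simp
    ultimately show ?thesis
      using is_abs_minus[OF assms(1), of "S - s"] by simp
  qed
  then have "nabs (s - s') = 0"
    using nonneg[of "s - s'"] by (metis less_irrefl order_le_less)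
  then show ?thesis
    using zero by simp
qed

lemma suminf_abs_finite_support:
  assumes "is_abs nabs" "\<And>k. k > n \<Longrightarrow> f k = 0"
  shows "suminf_abs nabs f = (\<Sum>k\<le>n. f k)"
proof -
  have partial_sums: "(\<Sum>k<m. f k) = (\<Sum>k\<le>n. f k)" if "m \<ge> Suc n" for m
  proof -
    have "(\<Sum>k<m. f k) = (\<Sum>k<Suc n. f k)"
      using that by (intro sum.mono_neutral_right) (auto simp: assms(2))
    then show ?thesis
      by (simp add: lessThan_Suc_atMost)
  qed
  have "nabs 0 = 0"
    using assms(1) unfolding is_abs_def by auto
  then have "sums_abs nabs f (\<Sum>k\<le>n. f k)"
    unfolding sums_abs_def using partial_sums by (metis diff_self)
  then show ?thesis
    unfolding suminf_abs_def using sums_abs_unique[OF assms(1)] by blast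
qed

lemma Sy_of_nat:
  assumes "is_abs nabs"
  shows "Sy nabs y f (of_nat n) =
    (\<Sum>k\<le>n. (-1) ^ k * fact k * bin y k * of_nat (n choose k) * f (of_nat (n - k)))"
  unfolding Sy_def
  by (subst suminf_abs_finite_support[OF assms, of n])
     (auto simp: bin_of_nat of_nat_diff intro: sum.cong)

lemma one_minus_t_pow_mult_Aser:
  assumes "is_abs nabs"
  shows "one_minus_t_pow y * Aser f = Aser (Sy nabs y f)"
proof (rule fps_ext)
  fix n
  have "(one_minus_t_pow y * Aser f) $ n
      = (\<Sum>k\<le>n. (-1) ^ k * bin y k * (f (of_nat (n - k)) / fact (n - k)))"
    by (simp add: fps_mult_nth one_minus_t_pow_def Aser_def atLeast0AtMost)
  also have "\<dots> = (\<Sum>k\<le>n. (-1) ^ k * fact k * bin y k * of_nat (n choose k)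
                            * f (of_nat (n - k))) / fact n"
    unfolding sum_divide_distrib by (intro sum.cong) (auto simp: binomial_fact field_simps)
  also have "\<dots> = Aser (Sy nabs y f) $ n"
    by (simp add: Aser_def Sy_of_nat[OF assms])
  finally show "(one_minus_t_pow y * Aser f) $ n = Aser (Sy nabs y f) $ n" .
qed

lemma Aser_shift: "Aser (\<lambda>x. f (x + 1)) = fps_deriv (Aser f)"
  by (rule fps_ext) (simp add: Aser_def fact_Suc del: of_nat_Suc, simp add: add.commute)

lemma Aser_nabla: "Aser (nabla f) = fps_deriv (Aser f) - Aser f"
  using Aser_shift[of f] by (simp add: fps_eq_iff Aser_def nabla_def diff_divide_distrib)

lemma fps_exp_mult_Aser_nabla_pow:
  "fps_exp (-1) * Aser ((nabla ^^ n) f) = fps_nth_deriv n (fps_exp (-1) * Aser f)"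
proof (induction n)
  case 0
  then show ?case by simp
next
  case (Suc n)
  have "fps_exp (-1) * Aser ((nabla ^^ Suc n) f)
      = fps_exp (-1) * (fps_deriv (Aser ((nabla ^^ n) f)) - Aser ((nabla ^^ n) f))"
    by (simp add: Aser_nabla)
  also have "\<dots> = fps_deriv (fps_exp (-1) * Aser ((nabla ^^ n) f))"
    by (simp add: fps_const_neg[symmetric] algebra_simps del: fps_const_neg)
  also have "\<dots> = fps_nth_deriv (Suc n) (fps_exp (-1) * Aser f)"
    by (simp only: Suc.IH fps_nth_deriv_commute)
  finally show ?case .
qed

lemma Pser_eq_fps_exp_mult_Aser: "Pser f = fps_exp (-1) * Aser f"
proof (rule fps_ext)
  fix n
  have "(nabla ^^ n) f 0 = (fps_exp (-1) * Aser ((nabla ^^ n) f)) $ 0"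
    by (simp add: Aser_def)
  also have "\<dots> = fact n * (fps_exp (-1) * Aser f) $ n"
    by (simp only: fps_exp_mult_Aser_nabla_pow fps_deriv_maclauren_0) simp
  finally show "Pser f $ n = (fps_exp (-1) * Aser f) $ n"
    by (simp add: Pser_def field_simps)
qed

theorem proposition6p2:
  fixes p :: nat and nabs :: "'a::field_char_0 \<Rightarrow> real"
    and phi :: "'a \<Rightarrow> 'a" and y :: 'a
  assumes "prime p"
    and "is_Cp p nabs"
    and "continuous_on_abs nabs (Zp nabs) phi"
    and "y \<in> Zp nabs"
  shows "one_minus_t_pow y * Aser phi = Aser (Sy nabs y phi)
       \<and> one_minus_t_pow y * Pser phi = Pser (Sy nabs y phi)"
proof -
  have "is_abs nabs"
    using assms(2) unfolding is_Cp_def by simp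
  then have A: "one_minus_t_pow y * Aser phi = Aser (Sy nabs y phi)"
    by (rule one_minus_t_pow_mult_Aser)
  have "one_minus_t_pow y * Pser phi = fps_exp (-1) * (one_minus_t_pow y * Aser phi)"
    by (simp add: Pser_eq_fps_exp_mult_Aser mult.left_commute)
  also have "\<dots> = Pser (Sy nabs y phi)"
    by (simp add: A Pser_eq_fps_exp_mult_Aser)
  finally show ?thesis
    using A by simp
qed

end
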